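(* Let $(X,d)$ be a finite ultrametric space with $|X|\geqslant 2$. If $(X,d)\in\mathfrak U$, then the diametral graph $G_d$ of $(X,d)$ is a complete bipartite graph.
   Context: For a metric space $(X,d)$, its spectrum is $\operatorname{Sp}(X)=\{d(x,y): x,y\in X,\ x\neq y\}$ and $\operatorname{diam}X=\sup\{d(x,y):x,y\in X\}$. $\mathfrak U$ denotes the class of finite ultrametric spaces $X$ with $|\operatorname{Sp}(X)|=|X|-1$. The diametral graph $G_d$ of $(X,d)$ is the graph with vertex set $X$ in which $\{u,v\}$ is an edge iff $d(u,v)=\operatorname{diam}X$. Graphs are simple undirected graphs $(V,E)$ with $V\neq\varnothing$. A nonempty graph $G$ is complete $k$-partite, written $G=G[X_1,\dots,X_k]$, if its vertex set is partitioned into $k$ disjoint nonempty sets $X_1,\dots,X_k$ such that no edge joins two vertices of the same $X_i$ and any two vertices from different parts are adjacent; complete bipartite means $k=2$. *)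

theory Defs
  imports Complex_Main
begin

definition metric_on :: "'a set \<Rightarrow> ('a \<Rightarrow> 'a \<Rightarrow> real) \<Rightarrow> bool" where
  "metric_on X d \<longleftrightarrow>
     (\<forall>x\<in>X. \<forall>y\<in>X. d x y \<ge> 0 \<and> (d x y = 0 \<longleftrightarrow> x = y) \<and> d x y = d y x) \<and>
     (\<forall>x\<in>X. \<forall>y\<in>X. \<forall>z\<in>X. d x z \<le> d x y + d y z)"

definition ultrametric_on :: "'a set \<Rightarrow> ('a \<Rightarrow> 'a \<Rightarrow> real) \<Rightarrow> bool" where
  "ultrametric_on X d \<longleftrightarrow> metric_on X d \<and>
     (\<forall>x\<in>X. \<forall>y\<in>X. \<forall>z\<in>X. d x z \<le> max (d x y) (d y z))"

definition spectrum_of :: "'a set \<Rightarrow> ('a \<Rightarrow> 'a \<Rightarrow> real) \<Rightarrow> real set" where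
  "spectrum_of X d = {d x y | x y. x \<in> X \<and> y \<in> X \<and> x \<noteq> y}"

definition diam_of :: "'a set \<Rightarrow> ('a \<Rightarrow> 'a \<Rightarrow> real) \<Rightarrow> real" where
  "diam_of X d = Sup {d x y | x y. x \<in> X \<and> y \<in> X}"

definition in_class_U :: "'a set \<Rightarrow> ('a \<Rightarrow> 'a \<Rightarrow> real) \<Rightarrow> bool" where
  "in_class_U X d \<longleftrightarrow> finite X \<and> ultrametric_on X d \<and>
     card (spectrum_of X d) = card X - 1"

definition diametral_edge :: "'a set \<Rightarrow> ('a \<Rightarrow> 'a \<Rightarrow> real) \<Rightarrow> 'a \<Rightarrow> 'a \<Rightarrow> bool" where
  "diametral_edge X d u v \<longleftrightarrow> u \<in> X \<and> v \<in> X \<and> u \<noteq> v \<and> d u v = diam_of X d"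

definition complete_bipartite :: "'a set \<Rightarrow> ('a \<Rightarrow> 'a \<Rightarrow> bool) \<Rightarrow> bool" where
  "complete_bipartite V E \<longleftrightarrow> V \<noteq> {} \<and>
     (\<exists>A B. A \<noteq> {} \<and> B \<noteq> {} \<and> A \<inter> B = {} \<and> A \<union> B = V \<and>
        (\<forall>u\<in>V. \<forall>v\<in>V. E u v \<longleftrightarrow> (u \<in> A \<and> v \<in> B) \<or> (u \<in> B \<and> v \<in> A)))"

end

theory Submission
  imports Defs
begin

text \<open>Adding a point y to a finite ultrametric space adds at most one new distance: if z is a
  nearest neighbour of y, every other distance d y w either equals d y z or, by the
  isosceles property, equals d z w. Hence |Sp(X)| \<le> |Sp(S)| + |X - S| for every nonempty
  S \<subseteq> X. For X in \<open>\<mathfrak>U\<close> this forbids three points at pairwise distance diam X, so the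
  points at distance diam X from a fixed a and the remaining points form the two sides of
  the diametral graph.\<close>

lemma ultrametric_onD:
  assumes "ultrametric_on X d"
  shows ultrametric_on_sym: "\<And>x y. x \<in> X \<Longrightarrow> y \<in> X \<Longrightarrow> d x y = d y x"
    and ultrametric_on_zero_iff: "\<And>x y. x \<in> X \<Longrightarrow> y \<in> X \<Longrightarrow> d x y = 0 \<longleftrightarrow> x = y"
    and ultrametric_on_nonneg: "\<And>x y. x \<in> X \<Longrightarrow> y \<in> X \<Longrightarrow> d x y \<ge> 0"
    and ultrametric_on_max: "\<And>x y z. x \<in> X \<Longrightarrow> y \<in> X \<Longrightarrow> z \<in> X \<Longrightarrow> d x z \<le> max (d x y) (d y z)"
  using assms unfolding ultrametric_on_def metric_on_def by blast+

lemma ultrametric_on_subset: "ultrametric_on X d \<Longrightarrow> Y \<subseteq> X \<Longrightarrow> ultrametric_on Y d"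
  unfolding ultrametric_on_def metric_on_def by blast

lemma finite_spectrum_of: "finite X \<Longrightarrow> finite (spectrum_of X d)"
proof -
  have "spectrum_of X d \<subseteq> (\<lambda>(x, y). d x y) ` (X \<times> X)"
    unfolding spectrum_of_def by auto
  then show "finite X \<Longrightarrow> ?thesis" by (meson finite_SigmaI finite_imageI finite_subset)
qed

lemma card_spectrum_of_le_remove:
  assumes um: "ultrametric_on X d" and "finite X" and y: "y \<in> X" and "X - {y} \<noteq> {}"
  shows "card (spectrum_of X d) \<le> card (spectrum_of (X - {y}) d) + 1"
proof -
  let ?Y = "X - {y}"
  obtain z where z: "z \<in> ?Y" and nearest: "\<And>w. w \<in> ?Y \<Longrightarrow> d y z \<le> d y w"
    using ex_min_if_finite[of "(\<lambda>w. d y w) ` ?Y"] assms(2,4) by (fastforce simp: not_less)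
  have new: "d y w \<in> spectrum_of ?Y d \<union> {d y z}" if w: "w \<in> ?Y" for w
  proof (cases "d y w = d y z")
    case False
    with nearest[OF w] have less: "d y z < d y w" by simp
    have "d y w \<le> max (d y z) (d z w)" "d z w \<le> max (d z y) (d y w)"
      using ultrametric_on_max[OF um] y z w by auto
    with less have "d y w = d z w" "w \<noteq> z"
      using ultrametric_on_sym[OF um, of z y] y z by auto
    with z w show ?thesis unfolding spectrum_of_def by blast
  qed simp
  have "spectrum_of X d \<subseteq> spectrum_of ?Y d \<union> {d y z}"
  proof
    fix s assume "s \<in> spectrum_of X d"
    then obtain p q where pq: "s = d p q" "p \<in> X" "q \<in> X" "p \<noteq> q"
      unfolding spectrum_of_def by blast
    consider "p = y" | "q = y" | "p \<in> ?Y" "q \<in> ?Y" using pq by blast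
    then show "s \<in> spectrum_of ?Y d \<union> {d y z}"
    proof cases
      case 2
      then show ?thesis using new[of p] pq ultrametric_on_sym[OF um, of p q] by auto
    qed (use new pq in \<open>auto simp: spectrum_of_def\<close>)
  qed
  then have "card (spectrum_of X d) \<le> card (spectrum_of ?Y d \<union> {d y z})"
    by (intro card_mono) (use assms(2) finite_spectrum_of[of ?Y d] in auto)
  also have "\<dots> \<le> card (spectrum_of ?Y d) + 1"
    using card_Un_le[of "spectrum_of ?Y d" "{d y z}"] by simp
  finally show ?thesis .
qed

lemma card_spectrum_of_Un_le:
  assumes "finite T"
  shows "ultrametric_on (S \<union> T) d \<Longrightarrow> finite S \<Longrightarrow> S \<noteq> {} \<Longrightarrow> S \<inter> T = {} \<Longrightarrow>
    card (spectrum_of (S \<union> T) d) \<le> card (spectrum_of S d) + card T"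
  using assms
proof (induction T rule: finite_induct)
  case (insert y T)
  have remove: "S \<union> insert y T - {y} = S \<union> T" using insert by auto
  have "card (spectrum_of (S \<union> insert y T) d) \<le> card (spectrum_of (S \<union> insert y T - {y}) d) + 1"
    using insert by (intro card_spectrum_of_le_remove) auto
  also have "\<dots> = card (spectrum_of (S \<union> T) d) + 1" by (simp only: remove)
  also have "\<dots> \<le> card (spectrum_of S d) + card T + 1"
    using insert ultrametric_on_subset[of "S \<union> insert y T" d "S \<union> T"] by auto
  finally show ?case using insert by simp
qed simp

lemma card_spectrum_of_le_subset:
  assumes "ultrametric_on X d" "finite X" "S \<subseteq> X" "S \<noteq> {}"
  shows "card (spectrum_of X d) + card S \<le> card (spectrum_of S d) + card X"
proof -
  have "card (spectrum_of (S \<union> (X - S)) d) \<le> card (spectrum_of S d) + card (X - S)"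
    using assms finite_subset[OF assms(3)]
    by (intro card_spectrum_of_Un_le) (auto simp: Un_absorb1)
  moreover have "card (X - S) + card S = card X"
    using assms(2,3) card_Diff_subset[of S X] card_mono[of X S] finite_subset by fastforce
  ultimately show ?thesis using assms(3) by (simp add: Un_absorb1)
qed

lemma in_class_U_no_equilateral_triple:
  assumes "in_class_U X d" "a \<in> X" "u \<in> X" "v \<in> X" "u \<noteq> v"
    and "d a u = r" "d a v = r" "d u v = r" "r \<noteq> 0"
  shows False
proof -
  let ?S = "{a, u, v}"
  have um: "ultrametric_on X d" and "finite X" and cU: "card (spectrum_of X d) = card X - 1"
    using assms(1) unfolding in_class_U_def by auto
  have "a \<noteq> u" "a \<noteq> v"
    using ultrametric_on_zero_iff[OF um, of a u] ultrametric_on_zero_iff[OF um, of a v] assms(2-)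
    by auto
  have "spectrum_of ?S d \<subseteq> {r}"
    using assms(2-) ultrametric_on_sym[OF um] unfolding spectrum_of_def by fastforce
  then have "card (spectrum_of ?S d) \<le> 1"
    using card_mono[of "{r}"] by fastforce
  moreover have "card ?S = 3" using \<open>a \<noteq> u\<close> \<open>a \<noteq> v\<close> \<open>u \<noteq> v\<close> by simp
  moreover have "card (spectrum_of X d) + card ?S \<le> card (spectrum_of ?S d) + card X"
    using card_spectrum_of_le_subset[OF um \<open>finite X\<close>] assms(2-4) by simp
  ultimately show False using cU by linarith
qed

lemma diam_of_eq_Max:
  assumes "finite X" "X \<noteq> {}"
  shows "diam_of X d = Max {d x y | x y. x \<in> X \<and> y \<in> X}"
proof -
  have "{d x y | x y. x \<in> X \<and> y \<in> X} = (\<lambda>(x, y). d x y) ` (X \<times> X)" by auto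
  then show ?thesis
    using assms unfolding diam_of_def by (simp add: cSup_eq_Max)
qed

lemma dist_le_diam_of: "finite X \<Longrightarrow> x \<in> X \<Longrightarrow> y \<in> X \<Longrightarrow> d x y \<le> diam_of X d"
  by (subst diam_of_eq_Max) (auto intro!: Max_ge finite_image_set2)

lemma diam_of_attained:
  assumes "finite X" "X \<noteq> {}"
  obtains a b where "a \<in> X" "b \<in> X" "d a b = diam_of X d"
proof -
  have "Max {d x y | x y. x \<in> X \<and> y \<in> X} \<in> {d x y | x y. x \<in> X \<and> y \<in> X}"
    using assms by (intro Max_in) (auto simp: finite_image_set2)
  then show ?thesis using that by (auto simp: diam_of_eq_Max[OF assms])
qed

lemma diam_of_pos:
  assumes "ultrametric_on X d" "finite X" "card X \<ge> 2"
  shows "0 < diam_of X d"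
proof -
  have "\<not> card X \<le> Suc 0" using assms(3) by simp
  then obtain p q where pq: "p \<in> X" "q \<in> X" "p \<noteq> q"
    using card_le_Suc0_iff_eq[OF assms(2)] by blast
  then have "0 < d p q"
    using ultrametric_on_nonneg[OF assms(1)] ultrametric_on_zero_iff[OF assms(1)]
    by (simp add: less_le)
  then show ?thesis using dist_le_diam_of[OF assms(2) pq(1,2), of d] by linarith
qed

text \<open>Sphere and open ball of radius D around a: by the isosceles property a pair meeting
  both is at distance D, and a pair inside the ball is strictly closer.\<close>

lemma ultrametric_diameter_pairs_iff:
  assumes um: "ultrametric_on X d" and a: "a \<in> X"
    and bounded: "\<And>x y. x \<in> X \<Longrightarrow> y \<in> X \<Longrightarrow> d x y \<le> D"
    and no_triple: "\<And>u v. u \<in> X \<Longrightarrow> v \<in> X \<Longrightarrow> u \<noteq> v \<Longrightarrow> d a u = D \<Longrightarrow> d a v = D \<Longrightarrow> d u v \<noteq> D"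
    and u: "u \<in> X" and v: "v \<in> X"
  shows "u \<noteq> v \<and> d u v = D \<longleftrightarrow> (d a u < D \<and> d a v = D) \<or> (d a u = D \<and> d a v < D)"
proof -
  have across: "x \<noteq> y \<and> d x y = D" if "x \<in> X" "y \<in> X" "d a x < D" "d a y = D" for x y
  proof -
    have "d a y \<le> max (d a x) (d x y)" using ultrametric_on_max[OF um] a that(1,2) by blast
    then show ?thesis using bounded[of x y] that by auto
  qed
  have inside: "d x y < D" if "x \<in> X" "y \<in> X" "d a x < D" "d a y < D" for x y
  proof -
    have "d x y \<le> max (d x a) (d a y)" using ultrametric_on_max[OF um] a that(1,2) by blast
    then show ?thesis using ultrametric_on_sym[OF um, of x a] a that by auto
  qed
  have "d a u \<le> D" "d a v \<le> D" using bounded a u v by auto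
  then show ?thesis
    using across[OF u v] across[OF v u] inside[OF u v] no_triple[OF u v]
      ultrametric_on_sym[OF um, OF u v] by force
qed

theorem corollary5:
  fixes X :: "'a set" and d :: "'a \<Rightarrow> 'a \<Rightarrow> real"
  assumes "finite X" and "ultrametric_on X d" and "card X \<ge> 2"
    and "in_class_U X d"
  shows "complete_bipartite X (diametral_edge X d)"
proof -
  let ?D = "diam_of X d"
  have bounded: "\<And>x y. x \<in> X \<Longrightarrow> y \<in> X \<Longrightarrow> d x y \<le> ?D"
    using dist_le_diam_of[OF assms(1)] .
  have "0 < ?D" using diam_of_pos[OF assms(2,1,3)] .
  have "X \<noteq> {}" using assms(3) by auto
  then obtain a b where ab: "a \<in> X" "b \<in> X" "d a b = ?D"
    using diam_of_attained[OF assms(1)] by metis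
  define A where "A = {x \<in> X. d a x < ?D}"
  define B where "B = {x \<in> X. d a x = ?D}"
  have "a \<in> A" "b \<in> B"
    using ab \<open>0 < ?D\<close> ultrametric_on_zero_iff[OF assms(2) ab(1) ab(1)] by (auto simp: A_def B_def)
  then have parts: "A \<noteq> {}" "B \<noteq> {}" "A \<inter> B = {}" "A \<union> B = X"
    using ab(1) bounded by (auto simp: A_def B_def less_le)
  have no_triple: "d u v \<noteq> ?D"
    if "u \<in> X" "v \<in> X" "u \<noteq> v" "d a u = ?D" "d a v = ?D" for u v
    using in_class_U_no_equilateral_triple[OF assms(4) ab(1) that] \<open>0 < ?D\<close> by auto
  have "diametral_edge X d u v \<longleftrightarrow> (u \<in> A \<and> v \<in> B) \<or> (u \<in> B \<and> v \<in> A)"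
    if "u \<in> X" "v \<in> X" for u v
    using ultrametric_diameter_pairs_iff[OF assms(2) ab(1) bounded no_triple that] that
    unfolding diametral_edge_def A_def B_def by (simp only: mem_Collect_eq simp_thms)
  then show ?thesis
    unfolding complete_bipartite_def using \<open>X \<noteq> {}\<close> parts by blast
qed

end
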